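(* Let $p$ be an odd prime, $c\in\mathbb Z_p$ with $c(c^2+1)\not\equiv0\pmod p$. Then $$\Big(\sum_{k=0}^{[p/4]}\binom{4k}{2k}\Big(\frac{c^2}{16(c^2+1)}\Big)^k\Big)\Big(\sum_{k=0}^{[p/4]}\binom{4k}{2k}\frac1{(16(c^2+1))^k}\Big)\equiv\Big(\frac{2(c^2+1)}{p}\Big)\pmod p.$$
   Context: $[x]$ is the greatest integer $\le x$; $\mathbb Z_p$ is the set of rational numbers whose denominator is not divisible by $p$; $(\frac{\cdot}{p})$ is the Legendre symbol. *)

theory Defs
  imports "HOL-Number_Theory.Quadratic_Reciprocity"
begin

definition Zp :: "nat \<Rightarrow> rat set" where
  "Zp p = {x. \<not> int p dvd snd (quotient_of x)}"

definition cong_Zp :: "nat \<Rightarrow> rat \<Rightarrow> rat \<Rightarrow> bool" where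
  "cong_Zp p x y \<longleftrightarrow> (x - y) / of_nat p \<in> Zp p"

text \<open>Legendre symbol of an element a/b of Z_p (b coprime to p): the Legendre
  symbol of a * b^{-1} mod p, which equals Legendre(a*b) since (b/p)^2 = 1.\<close>
definition Legendre_rat :: "rat \<Rightarrow> nat \<Rightarrow> int" where
  "Legendre_rat x p = Legendre (fst (quotient_of x) * snd (quotient_of x)) (int p)"

end

theory Submission
  imports Defs "HOL-Number_Theory.Number_Theory"
begin

(*
  Write p = 2n + 1, choose an integer C congruent to c and put D = C^2 + 1, which is not a
  square.  In Z[sqrt D] the Frobenius congruence (sqrt D + m)^p == D^n sqrt D + m (mod p) gives
    (m^2 - D) ((sqrt D + m)^(2n) + (sqrt D - m)^(2n)) == 2 (m^2 - D^(n+1))  (mod p)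
  for every integer m.  For m = C + 1 and m = C - 1 the squares factor as
  (sqrt D +- m)^2 = 2 (sqrt D +- C) (sqrt D +- 1), so adding the two instances yields
  2^n D^(n mod 2) P(C) P(1) == 1 (mod p), where (sqrt D + c)^n + (sqrt D - c)^n = 2 sqrt D^(n mod 2) P(c);
  as sqrt D is irrational, this is a congruence between integers.  Since
  binom(2j, j) == (-4)^j binom(n, j) (mod p), the polynomial P(c) is congruent to D^(n div 2) times the
  truncated sum of binom(4k, 2k) (c^2 / (16 D))^k.  Hence the product of the two sums is
  (2D)^(-n) == (2D)^n (mod p), the Legendre symbol by Euler's criterion.
*)

lemma fermat_theorem_int:
  assumes "prime p" "coprime a (int p)"
  shows "[a ^ (p - 1) = 1] (mod int p)"
proof -
  have "residues (int p)"
    using prime_gt_1_nat[OF assms(1)] by (simp add: residues_def)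
  from residues.euler_theorem[OF this assms(2)] show ?thesis
    using totient_prime[OF assms(1)] by simp
qed

lemma power_prime_cong_self_int:
  assumes "prime p"
  shows "[a ^ p = a] (mod int p)"
proof (cases "coprime a (int p)")
  case True
  have "[a ^ (p - 1) * a = 1 * a] (mod int p)"
    using fermat_theorem_int[OF assms True] by (rule cong_scalar_right)
  then show ?thesis
    using prime_gt_0_nat[OF assms] by (simp add: power_eq_if mult.commute)
next
  case False
  then have "int p dvd a"
    using assms prime_imp_coprime[of "int p" a] by (auto simp: coprime_commute)
  then show ?thesis
    using prime_gt_0_nat[OF assms] by (simp add: cong_iff_dvd_diff dvd_diff dvd_trans[of _ a])
qed

lemma cong_inverse_half_power:
  assumes "prime p" "p = 2 * n + 1" "coprime x (int p)" "[x ^ n * y = 1] (mod int p)"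
  shows "[y = x ^ n] (mod int p)"
proof -
  have "p - 1 = n + n"
    using assms(2) by simp
  have "[y = x ^ (p - 1) * y] (mod int p)"
    using cong_sym[OF cong_scalar_right[OF fermat_theorem_int[OF assms(1,3)], of y]] by simp
  also have "x ^ (p - 1) * y = x ^ n * (x ^ n * y)"
    by (simp only: \<open>p - 1 = n + n\<close> power_add mult.assoc)
  also have "[x ^ n * (x ^ n * y) = x ^ n * 1] (mod int p)"
    using assms(4) by (rule cong_scalar_left)
  finally show ?thesis
    by simp
qed

section \<open>Central binomial coefficients modulo p\<close>

lemma central_binomial_Suc:
  "Suc j * ((2 * Suc j) choose Suc j) = 2 * (2 * j + 1) * ((2 * j) choose j)"
proof -
  have "Suc j * ((2 * Suc j) choose Suc j) = (2 * j + 2) * ((2 * j + 1) choose j)"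
    using Suc_times_binomial[of j "2 * j + 1"] by simp
  moreover have "Suc j * ((2 * j + 1) choose j) = (2 * j + 1) * ((2 * j) choose j)"
    using Suc_times_binomial_eq[of "2 * j" j] binomial_symmetric[of "Suc j" "2 * j + 1"] by simp
  ultimately show ?thesis
    by (simp add: algebra_simps)
qed

lemma binomial_Suc_absorb: "Suc j * (n choose Suc j) = (n - j) * (n choose j)"
  by (metis binomial_absorption binomial_absorb_comp)

lemma central_binomial_cong:
  assumes "prime p" "p = 2 * n + 1" "j \<le> n"
  shows "[int ((2 * j) choose j) = (-4) ^ j * int (n choose j)] (mod int p)"
  using assms(3)
proof (induction j)
  case 0
  then show ?case by simp
next
  case (Suc j)
  have "int (2 * (2 * j + 1)) - (-4 * int (n - j)) = int p * 2"
    using Suc.prems assms(2) by (simp add: of_nat_diff)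
  then have "[int (2 * (2 * j + 1)) = -4 * int (n - j)] (mod int p)"
    by (simp add: cong_iff_dvd_diff)
  moreover have "[int ((2 * j) choose j) = (-4) ^ j * int (n choose j)] (mod int p)"
    using Suc by simp
  ultimately have step: "[int (2 * (2 * j + 1)) * int ((2 * j) choose j)
      = (-4 * int (n - j)) * ((-4) ^ j * int (n choose j))] (mod int p)"
    by (rule cong_mult)
  have lhs: "int (Suc j) * int ((2 * Suc j) choose Suc j) = int (2 * (2 * j + 1)) * int ((2 * j) choose j)"
    by (simp only: of_nat_mult[symmetric] central_binomial_Suc)
  have "int (Suc j) * int (n choose Suc j) = int (n - j) * int (n choose j)"
    by (simp only: of_nat_mult[symmetric] binomial_Suc_absorb)
  then have rhs: "int (Suc j) * ((-4) ^ Suc j * int (n choose Suc j))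
      = (-4 * int (n - j)) * ((-4) ^ j * int (n choose j))"
    by (simp add: mult_ac)
  have cong: "[int (Suc j) * int ((2 * Suc j) choose Suc j)
      = int (Suc j) * ((-4) ^ Suc j * int (n choose Suc j))] (mod int p)"
    unfolding lhs rhs by (rule step)
  have "\<not> p dvd Suc j"
    using Suc.prems assms(2) by (auto dest: dvd_imp_le)
  then have "coprime (Suc j) p"
    using prime_imp_coprime[OF assms(1)] coprime_commute by blast
  then have "coprime (int (Suc j)) (int p)"
    by (simp only: coprime_int_iff)
  then show ?case
    using cong cong_mult_lcancel by blast
qed

definition binomial_even_sum :: "nat \<Rightarrow> int \<Rightarrow> int \<Rightarrow> int" where
  "binomial_even_sum n c D = (\<Sum>j\<le>n div 2. int (n choose (2 * j)) * c ^ (2 * j) * D ^ (n div 2 - j))"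

lemma sum_atMost_even:
  fixes f :: "nat \<Rightarrow> 'a::comm_monoid_add"
  assumes "\<And>k. odd k \<Longrightarrow> f k = 0"
  shows "(\<Sum>k\<le>n. f k) = (\<Sum>j\<le>n div 2. f (2 * j))"
proof -
  have "(\<Sum>j\<le>n div 2. f (2 * j)) = (\<Sum>k \<in> (*) 2 ` {..n div 2}. f k)"
    by (simp add: sum.reindex inj_on_def)
  also have "\<dots> = (\<Sum>k\<le>n. f k)"
  proof (rule sum.mono_neutral_left)
    show "\<forall>k \<in> {..n} - (*) 2 ` {..n div 2}. f k = 0"
    proof
      fix k assume k: "k \<in> {..n} - (*) 2 ` {..n div 2}"
      have "odd k"
      proof
        assume "even k"
        then have "k = 2 * (k div 2)" "k div 2 \<le> n div 2"
          using k by (simp_all add: div_le_mono)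
        then show False using k by blast
      qed
      then show "f k = 0" by (rule assms)
    qed
  qed auto
  finally show ?thesis ..
qed

lemma central_binomial_sum_cong:
  fixes c D E :: int
  assumes "prime p" "p = 2 * n + 1" "[16 * D * E = 1] (mod int p)"
  shows "[D ^ (n div 2) * (\<Sum>k\<le>n div 2. int ((4 * k) choose (2 * k)) * (c\<^sup>2 * E) ^ k)
    = binomial_even_sum n c D] (mod int p)"
  unfolding binomial_even_sum_def sum_distrib_left
proof (rule cong_sum)
  fix k assume "k \<in> {..n div 2}"
  then have k: "k \<le> n div 2" by simp
  have "[int ((2 * (2 * k)) choose (2 * k)) = (-4) ^ (2 * k) * int (n choose (2 * k))] (mod int p)"
    using k by (intro central_binomial_cong assms(1,2)) simp
  then have binomial: "[int ((4 * k) choose (2 * k)) = 16 ^ k * int (n choose (2 * k))] (mod int p)"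
    by (simp add: power_mult)
  have "(c\<^sup>2) ^ k = c ^ (2 * k)"
    by (simp add: power_mult)
  moreover have "D ^ (n div 2) = D ^ (n div 2 - k) * D ^ k"
    using k by (simp flip: power_add)
  ultimately have "D ^ (n div 2) * (int ((4 * k) choose (2 * k)) * (c\<^sup>2 * E) ^ k)
      = int ((4 * k) choose (2 * k)) * (c ^ (2 * k) * D ^ (n div 2 - k) * (D * E) ^ k)"
    unfolding power_mult_distrib by (simp only: mult_ac)
  also have "[\<dots> = 16 ^ k * int (n choose (2 * k)) * (c ^ (2 * k) * D ^ (n div 2 - k) * (D * E) ^ k)] (mod int p)"
    using binomial by (rule cong_scalar_right)
  also have "16 ^ k * int (n choose (2 * k)) * (c ^ (2 * k) * D ^ (n div 2 - k) * (D * E) ^ k)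
      = int (n choose (2 * k)) * c ^ (2 * k) * D ^ (n div 2 - k) * (16 * D * E) ^ k"
    by (simp add: power_mult_distrib mult_ac)
  also have "[\<dots> = int (n choose (2 * k)) * c ^ (2 * k) * D ^ (n div 2 - k) * 1 ^ k] (mod int p)"
    using assms(3) by (intro cong_scalar_left cong_pow)
  finally show "[D ^ (n div 2) * (int ((4 * k) choose (2 * k)) * (c\<^sup>2 * E) ^ k)
      = int (n choose (2 * k)) * c ^ (2 * k) * D ^ (n div 2 - k)] (mod int p)"
    by simp
qed

section \<open>The ring \<int>[u] modulo p\<close>

definition int_adjoin :: "real \<Rightarrow> real set" where
  "int_adjoin u = {of_int a + of_int b * u | a b. True}"

definition cong_adjoin :: "nat \<Rightarrow> real \<Rightarrow> real \<Rightarrow> real \<Rightarrow> bool" where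
  "cong_adjoin p u x y \<longleftrightarrow> (\<exists>z \<in> int_adjoin u. x - y = of_nat p * z)"

lemma int_adjoin_of_int [simp]: "of_int a \<in> int_adjoin u"
  unfolding int_adjoin_def by (rule CollectI, rule exI[of _ a], rule exI[of _ 0]) simp

lemma int_adjoin_of_nat [simp]: "of_nat n \<in> int_adjoin u"
  using int_adjoin_of_int[of "int n"] by simp

lemma int_adjoin_0 [simp]: "0 \<in> int_adjoin u"
  using int_adjoin_of_int[of 0] by simp

lemma int_adjoin_1 [simp]: "1 \<in> int_adjoin u"
  using int_adjoin_of_int[of 1] by simp

lemma int_adjoin_generator [simp]: "u \<in> int_adjoin u"
  unfolding int_adjoin_def by (rule CollectI, rule exI[of _ 0], rule exI[of _ 1]) simp

lemma int_adjoin_add [simp]: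
  assumes "x \<in> int_adjoin u" "y \<in> int_adjoin u"
  shows "x + y \<in> int_adjoin u"
proof -
  obtain a b a' b' where "x = of_int a + of_int b * u" "y = of_int a' + of_int b' * u"
    using assms unfolding int_adjoin_def by blast
  then have "x + y = of_int (a + a') + of_int (b + b') * u"
    by (simp add: algebra_simps)
  then show ?thesis unfolding int_adjoin_def by blast
qed

lemma int_adjoin_uminus [simp]:
  assumes "x \<in> int_adjoin u"
  shows "- x \<in> int_adjoin u"
proof -
  obtain a b where "x = of_int a + of_int b * u"
    using assms unfolding int_adjoin_def by blast
  then have "- x = of_int (- a) + of_int (- b) * u"
    by simp
  then show ?thesis unfolding int_adjoin_def by blast
qed

lemma int_adjoin_diff [simp]: "x \<in> int_adjoin u \<Longrightarrow> y \<in> int_adjoin u \<Longrightarrow> x - y \<in> int_adjoin u"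
  using int_adjoin_add[of x u "- y"] by simp

lemma cong_adjoin_refl [simp]: "cong_adjoin p u x x"
  unfolding cong_adjoin_def by (rule bexI[of _ 0]) simp_all

lemma cong_adjoin_trans [trans]:
  assumes "cong_adjoin p u x y" "cong_adjoin p u y w"
  shows "cong_adjoin p u x w"
proof -
  obtain z z' where "z \<in> int_adjoin u" "z' \<in> int_adjoin u"
    and "x - y = of_nat p * z" "y - w = of_nat p * z'"
    using assms unfolding cong_adjoin_def by blast
  then show ?thesis
    unfolding cong_adjoin_def by (intro bexI[of _ "z + z'"]) (simp_all add: algebra_simps)
qed

lemma cong_adjoin_add:
  assumes "cong_adjoin p u x y" "cong_adjoin p u x' y'"
  shows "cong_adjoin p u (x + x') (y + y')"
proof -
  obtain z z' where "z \<in> int_adjoin u" "z' \<in> int_adjoin u"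
    and "x - y = of_nat p * z" "x' - y' = of_nat p * z'"
    using assms unfolding cong_adjoin_def by blast
  then show ?thesis
    unfolding cong_adjoin_def by (intro bexI[of _ "z + z'"]) (simp_all add: algebra_simps)
qed

lemma cong_adjoin_diff:
  assumes "cong_adjoin p u x y" "cong_adjoin p u x' y'"
  shows "cong_adjoin p u (x - x') (y - y')"
proof -
  obtain z z' where "z \<in> int_adjoin u" "z' \<in> int_adjoin u"
    and "x - y = of_nat p * z" "x' - y' = of_nat p * z'"
    using assms unfolding cong_adjoin_def by blast
  then show ?thesis
    unfolding cong_adjoin_def by (intro bexI[of _ "z - z'"]) (simp_all add: algebra_simps)
qed

lemma cong_adjoin_of_int:
  assumes "[a = b] (mod int p)"
  shows "cong_adjoin p u (of_int a) (of_int b)"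
proof -
  obtain k where "a - b = int p * k"
    using assms by (auto simp: cong_iff_dvd_diff elim!: dvdE)
  then have "of_int a - of_int b = of_nat p * (of_int k :: real)"
    using arg_cong[of _ _ "of_int :: int \<Rightarrow> real"] by fastforce
  then show ?thesis
    unfolding cong_adjoin_def using int_adjoin_of_int by blast
qed

locale quadratic_integer =
  fixes u :: real and D :: int
  assumes square: "u * u = of_int D"
begin

lemma int_adjoin_mult [simp]:
  assumes "x \<in> int_adjoin u" "y \<in> int_adjoin u"
  shows "x * y \<in> int_adjoin u"
proof -
  obtain a b a' b' where "x = of_int a + of_int b * u" "y = of_int a' + of_int b' * u"
    using assms unfolding int_adjoin_def by blast
  then have "x * y = of_int (a * a' + b * b' * D) + of_int (a * b' + a' * b) * u"
    by (simp add: algebra_simps square[symmetric])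
  then show ?thesis unfolding int_adjoin_def by blast
qed

lemma int_adjoin_power [simp]: "x \<in> int_adjoin u \<Longrightarrow> x ^ k \<in> int_adjoin u"
  by (induction k) auto

lemma int_adjoin_sum [simp]: "(\<And>i. i \<in> S \<Longrightarrow> f i \<in> int_adjoin u) \<Longrightarrow> sum f S \<in> int_adjoin u"
  by (induction S rule: infinite_finite_induct) auto

lemma cong_adjoin_mult_right:
  assumes "cong_adjoin p u x y" "w \<in> int_adjoin u"
  shows "cong_adjoin p u (x * w) (y * w)"
proof -
  obtain z where "z \<in> int_adjoin u" "x - y = of_nat p * z"
    using assms(1) unfolding cong_adjoin_def by blast
  then have "z * w \<in> int_adjoin u" "x * w - y * w = of_nat p * (z * w)"
    using assms(2) by (simp_all add: algebra_simps)
  then show ?thesis unfolding cong_adjoin_def by blast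
qed

lemma frobenius_cong:
  assumes "prime p" "x \<in> int_adjoin u" "y \<in> int_adjoin u"
  shows "cong_adjoin p u ((x + y) ^ p) (x ^ p + y ^ p)"
proof -
  define z where "z = (\<Sum>k\<in>{0<..<p}. of_nat ((p choose k) div p) * x ^ k * y ^ (p - k))"
  have "z \<in> int_adjoin u"
    unfolding z_def using assms(2,3) by simp
  have "(x + y) ^ p = (\<Sum>k\<le>p. of_nat (p choose k) * x ^ k * y ^ (p - k))"
    by (rule binomial_ring)
  also have "\<dots> = (\<Sum>k\<in>{0<..<p}. of_nat (p choose k) * x ^ k * y ^ (p - k)) + x ^ p + y ^ p"
  proof -
    have "{..p} = insert 0 (insert p {0<..<p})"
      using prime_gt_0_nat[OF assms(1)] by auto
    then show ?thesis
      using prime_gt_0_nat[OF assms(1)] by (simp add: algebra_simps)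
  qed
  also have "(\<Sum>k\<in>{0<..<p}. of_nat (p choose k) * x ^ k * y ^ (p - k)) = of_nat p * z"
    unfolding z_def sum_distrib_left
  proof (rule sum.cong[OF refl])
    fix k assume "k \<in> {0<..<p}"
    then have "p dvd (p choose k)"
      using assms(1) by (intro dvd_choose_prime) auto
    then show "of_nat (p choose k) * x ^ k * y ^ (p - k) = of_nat p * (of_nat ((p choose k) div p) * x ^ k * y ^ (p - k))"
      by (simp add: of_nat_mult[symmetric] del: of_nat_mult)
  qed
  finally show ?thesis
    unfolding cong_adjoin_def using \<open>z \<in> int_adjoin u\<close> by auto
qed

lemma frobenius_shift:
  assumes "prime p" "p = 2 * n + 1"
  shows "cong_adjoin p u ((u + of_int m) ^ p) (of_int (D ^ n) * u + of_int m)"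
proof -
  have "cong_adjoin p u ((u + of_int m) ^ p) (u ^ p + of_int m ^ p)"
    using assms(1) by (rule frobenius_cong) simp_all
  also have "cong_adjoin p u \<dots> (u ^ p + of_int m)"
    using cong_adjoin_of_int[OF power_prime_cong_self_int[OF assms(1)]]
    by (intro cong_adjoin_add cong_adjoin_refl) simp
  also have "u ^ p + of_int m = of_int (D ^ n) * u + of_int m"
    using assms(2) by (simp add: power_add power_mult square[symmetric] power2_eq_square)
  finally show ?thesis .
qed

lemma conj_shift_power_sum_cong:
  assumes "prime p" "p = 2 * n + 1"
  shows "cong_adjoin p u (of_int (m\<^sup>2 - D) * ((u + of_int m) ^ (2 * n) + (u - of_int m) ^ (2 * n)))
    (of_int (2 * (m\<^sup>2 - D ^ (n + 1))))"
proof -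
  have factor: "of_int (m\<^sup>2 - D) * (u + of_int m) ^ (2 * n) = (u + of_int m) ^ p * (of_int m - u)" for m
  proof -
    have "(u + of_int m) * (of_int m - u) = of_int (m\<^sup>2 - D)"
      by (simp add: algebra_simps power2_eq_square square[symmetric])
    then show ?thesis
      using assms(2) by (simp add: mult_ac)
  qed
  have shift: "cong_adjoin p u (of_int (m\<^sup>2 - D) * (u + of_int m) ^ (2 * n))
      ((of_int (D ^ n) * u + of_int m) * (of_int m - u))" for m
    unfolding factor by (intro cong_adjoin_mult_right frobenius_shift[OF assms]) simp
  have lhs: "of_int (m\<^sup>2 - D) * ((u + of_int m) ^ (2 * n) + (u - of_int m) ^ (2 * n))
      = of_int (m\<^sup>2 - D) * (u + of_int m) ^ (2 * n) + of_int ((- m)\<^sup>2 - D) * (u + of_int (- m)) ^ (2 * n)"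
    by (simp add: algebra_simps)
  have "of_int (2 * (m\<^sup>2 - D ^ (n + 1))) = 2 * of_int m ^ 2 - 2 * of_int D ^ n * (u * u)"
    by (simp add: square)
  then have rhs: "of_int (2 * (m\<^sup>2 - D ^ (n + 1)))
      = (of_int (D ^ n) * u + of_int m) * (of_int m - u) + (of_int (D ^ n) * u + of_int (- m)) * (of_int (- m) - u)"
    by (simp add: algebra_simps power2_eq_square)
  show ?thesis
    unfolding lhs rhs by (rule cong_adjoin_add[OF shift shift])
qed

lemma conj_power_sum_eq:
  "(u + of_int c) ^ n + (u - of_int c) ^ n = 2 * u ^ (n mod 2) * of_int (binomial_even_sum n c D)"
proof -
  have "(u + of_int c) ^ n + (u - of_int c) ^ n
      = (\<Sum>k\<le>n. of_nat (n choose k) * (of_int c ^ k + (- of_int c) ^ k) * u ^ (n - k))"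
    using binomial_ring[of "of_int c" u n] binomial_ring[of "- of_int c" u n]
    by (simp add: add.commute sum.distrib[symmetric] algebra_simps)
  also have "\<dots> = (\<Sum>j\<le>n div 2. of_nat (n choose (2 * j)) * (of_int c ^ (2 * j) + (- of_int c) ^ (2 * j)) * u ^ (n - 2 * j))"
    by (rule sum_atMost_even) simp
  also have "\<dots> = (\<Sum>j\<le>n div 2. 2 * u ^ (n mod 2) * of_int (int (n choose (2 * j)) * c ^ (2 * j) * D ^ (n div 2 - j)))"
  proof (rule sum.cong[OF refl])
    fix j assume "j \<in> {..n div 2}"
    then have "j \<le> n div 2" by simp
    then have "n - 2 * j = n mod 2 + 2 * (n div 2 - j)"
      using div_mult_mod_eq[of n 2] by linarith
    then have "u ^ (n - 2 * j) = u ^ (n mod 2) * of_int D ^ (n div 2 - j)"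
      by (simp add: power_add power_mult power2_eq_square square)
    then show "of_nat (n choose (2 * j)) * (of_int c ^ (2 * j) + (- of_int c) ^ (2 * j)) * u ^ (n - 2 * j)
        = 2 * u ^ (n mod 2) * of_int (int (n choose (2 * j)) * c ^ (2 * j) * D ^ (n div 2 - j))"
      by simp
  qed
  finally show ?thesis
    by (simp add: binomial_even_sum_def sum_distrib_left)
qed

lemma cong_adjoin_of_int_imp_cong:
  assumes nonsquare: "\<And>t. D \<noteq> t\<^sup>2" and "cong_adjoin p u (of_int a) (of_int b)"
  shows "[a = b] (mod int p)"
proof -
  obtain A B where AB: "of_int a - of_int b = of_nat p * (of_int A + of_int B * u)"
    using assms(2) unfolding cong_adjoin_def int_adjoin_def by blast
  have "int p * B = 0"
  proof (rule ccontr)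
    assume "int p * B \<noteq> 0"
    define x where "x = a - b - int p * A"
    define y where "y = int p * B"
    have "of_int x = of_int y * u"
      using AB by (simp add: x_def y_def algebra_simps)
    then have "of_int (x\<^sup>2) = (of_int (y\<^sup>2 * D) :: real)"
      by (simp add: power2_eq_square square[symmetric] mult_ac)
    then have xy: "x\<^sup>2 = y\<^sup>2 * D"
      by (simp only: of_int_eq_iff)
    then have "y\<^sup>2 dvd x\<^sup>2"
      by simp
    then have "y dvd x"
      by simp
    then obtain t where "x = y * t" ..
    with xy \<open>int p * B \<noteq> 0\<close> have "D = t\<^sup>2"
      by (simp add: y_def power_mult_distrib)
    with nonsquare show False by blast
  qed
  with AB have "of_int (a - b) = (of_int (int p * A) :: real)"
    by (simp add: algebra_simps)
  then have "a - b = int p * A"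
    by (simp only: of_int_eq_iff)
  then show ?thesis
    by (simp add: cong_iff_dvd_diff)
qed

lemma shifted_power_sum:
  assumes "D = C\<^sup>2 + 1"
  shows "(u + of_int (C + 1)) ^ (2 * n) + (u - of_int (C + 1)) ^ (2 * n)
      + ((u + of_int (C - 1)) ^ (2 * n) + (u - of_int (C - 1)) ^ (2 * n))
    = of_int (2 ^ n * 4 * D ^ (n mod 2) * binomial_even_sum n C D * binomial_even_sum n 1 D)"
proof -
  have sq: "(u + of_int (C + 1))\<^sup>2 = 2 * ((u + of_int C) * (u + 1))"
    "(u - of_int (C + 1))\<^sup>2 = 2 * ((u - of_int C) * (u - 1))"
    "(u + of_int (C - 1))\<^sup>2 = 2 * ((u + of_int C) * (u - 1))"
    "(u - of_int (C - 1))\<^sup>2 = 2 * ((u - of_int C) * (u + 1))"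
    using square unfolding assms by (simp_all add: algebra_simps power2_eq_square)
  have "(u + of_int (C + 1)) ^ (2 * n) + (u - of_int (C + 1)) ^ (2 * n)
      + ((u + of_int (C - 1)) ^ (2 * n) + (u - of_int (C - 1)) ^ (2 * n))
    = 2 ^ n * (((u + of_int C) ^ n + (u - of_int C) ^ n) * ((u + 1) ^ n + (u - 1) ^ n))"
    unfolding power_mult sq power_mult_distrib by (simp add: algebra_simps)
  also have "\<dots> = 2 ^ n * 4 * (u * u) ^ (n mod 2) * of_int (binomial_even_sum n C D) * of_int (binomial_even_sum n 1 D)"
    using conj_power_sum_eq[of C n] conj_power_sum_eq[of 1 n] by (simp add: power_mult_distrib)
  finally show ?thesis
    by (simp add: square)
qed

lemma binomial_even_sum_product_cong_adjoin:
  assumes "prime p" "p = 2 * n + 1" "D = C\<^sup>2 + 1"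
  shows "cong_adjoin p u
    (of_int (8 * C * (2 ^ n * D ^ (n mod 2) * binomial_even_sum n C D * binomial_even_sum n 1 D)))
    (of_int (8 * C))"
proof -
  define Z where "Z = 2 ^ n * D ^ (n mod 2) * binomial_even_sum n C D * binomial_even_sum n 1 D"
  define S1 where "S1 = (u + of_int (C + 1)) ^ (2 * n) + (u - of_int (C + 1)) ^ (2 * n)"
  define S2 where "S2 = (u + of_int (C - 1)) ^ (2 * n) + (u - of_int (C - 1)) ^ (2 * n)"
  have sum: "S1 + S2 = of_int (4 * Z)"
    using shifted_power_sum[OF assms(3), of n] unfolding S1_def S2_def Z_def by (simp add: mult_ac)
  have coeffs: "(C + 1)\<^sup>2 - D = 2 * C" "(C - 1)\<^sup>2 - D = - (2 * C)"
    by (simp_all add: assms(3) power2_eq_square algebra_simps)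
  have "of_int ((C + 1)\<^sup>2 - D) * S1 - of_int ((C - 1)\<^sup>2 - D) * S2 = of_int (2 * C) * (S1 + S2)"
    unfolding coeffs by (simp add: algebra_simps)
  also have "\<dots> = of_int (8 * C * Z)"
    unfolding sum by simp
  finally have lhs: "of_int ((C + 1)\<^sup>2 - D) * S1 - of_int ((C - 1)\<^sup>2 - D) * S2 = of_int (8 * C * Z)" .
  have rhs: "of_int (2 * ((C + 1)\<^sup>2 - D ^ (n + 1))) - of_int (2 * ((C - 1)\<^sup>2 - D ^ (n + 1)))
      = (of_int (8 * C) :: real)"
    by (simp add: power2_eq_square algebra_simps)
  have "cong_adjoin p u (of_int ((C + 1)\<^sup>2 - D) * S1 - of_int ((C - 1)\<^sup>2 - D) * S2)
      (of_int (2 * ((C + 1)\<^sup>2 - D ^ (n + 1))) - of_int (2 * ((C - 1)\<^sup>2 - D ^ (n + 1))))"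
    unfolding S1_def S2_def by (intro cong_adjoin_diff conj_shift_power_sum_cong assms(1,2))
  then show ?thesis
    unfolding lhs rhs Z_def .
qed

end

section \<open>The congruence for integer c\<close>

lemma square_plus_one_not_square:
  fixes C t :: int
  assumes "C \<noteq> 0"
  shows "C\<^sup>2 + 1 \<noteq> t\<^sup>2"
proof
  assume eq: "C\<^sup>2 + 1 = t\<^sup>2"
  then have "\<bar>C\<bar> < \<bar>t\<bar>"
    by (metis abs_le_square_iff less_add_one not_le)
  then have "(\<bar>C\<bar> + 1)\<^sup>2 \<le> \<bar>t\<bar>\<^sup>2"
    by (intro power_mono) simp_all
  with eq assms show False
    by (simp add: power2_eq_square algebra_simps)
qed

lemma binomial_even_sum_product_cong:
  fixes C :: int
  assumes "prime p" "p = 2 * n + 1" "coprime C (int p)"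
  defines "D \<equiv> C\<^sup>2 + 1"
  shows "[2 ^ n * D ^ (n mod 2) * binomial_even_sum n C D * binomial_even_sum n 1 D = 1] (mod int p)"
proof -
  interpret quadratic_integer "sqrt (of_int D)" D
    by unfold_locales (simp add: D_def add_nonneg_nonneg)
  have "C \<noteq> 0"
    using assms(1,3) by (auto simp: prime_gt_1_nat)
  have cong: "[8 * C * (2 ^ n * D ^ (n mod 2) * binomial_even_sum n C D * binomial_even_sum n 1 D)
      = 8 * C * 1] (mod int p)"
    using binomial_even_sum_product_cong_adjoin[OF assms(1,2) D_def[THEN meta_eq_to_obj_eq]]
    by (intro cong_adjoin_of_int_imp_cong[OF square_plus_one_not_square[OF \<open>C \<noteq> 0\<close>, folded D_def]]) simp
  have "coprime (2 * (2 * (2 * C))) (int p)"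
    using assms(2,3) by (simp only: coprime_mult_left_iff) simp
  then have "coprime (8 * C) (int p)"
    by simp
  with cong show ?thesis
    using cong_mult_lcancel by blast
qed

lemma central_binomial_sum_product_cong:
  fixes C E :: int
  assumes "prime p" "odd p" "coprime C (int p)" "[16 * (C\<^sup>2 + 1) * E = 1] (mod int p)"
  shows "[(\<Sum>k = 0..p div 4. int ((4 * k) choose (2 * k)) * (C\<^sup>2 * E) ^ k)
      * (\<Sum>k = 0..p div 4. int ((4 * k) choose (2 * k)) * E ^ k)
    = (2 * (C\<^sup>2 + 1)) ^ ((p - 1) div 2)] (mod int p)"
proof -
  define n where "n = (p - 1) div 2"
  define D where "D = C\<^sup>2 + 1"
  define T1 where "T1 = (\<Sum>k\<le>n div 2. int ((4 * k) choose (2 * k)) * (C\<^sup>2 * E) ^ k)"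
  define T2 where "T2 = (\<Sum>k\<le>n div 2. int ((4 * k) choose (2 * k)) * (1\<^sup>2 * E) ^ k)"
  have p: "p = 2 * n + 1" "p div 4 = n div 2"
    using assms(2) unfolding n_def by presburger+
  have "n mod 2 + n div 2 + n div 2 = n"
    by presburger
  then have "D ^ n = D ^ (n mod 2) * D ^ (n div 2) * D ^ (n div 2)"
    by (simp only: power_add[symmetric])
  then have "(2 * D) ^ n * (T1 * T2) = 2 ^ n * D ^ (n mod 2) * (D ^ (n div 2) * T1) * (D ^ (n div 2) * T2)"
    unfolding power_mult_distrib by (simp only: mult_ac)
  also have "[\<dots> = 2 ^ n * D ^ (n mod 2) * binomial_even_sum n C D * binomial_even_sum n 1 D] (mod int p)"
  proof -
    have "[D ^ (n div 2) * T1 = binomial_even_sum n C D] (mod int p)"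
      unfolding T1_def using assms(4) by (intro central_binomial_sum_cong assms(1) p(1)) (simp add: D_def)
    moreover have "[D ^ (n div 2) * T2 = binomial_even_sum n 1 D] (mod int p)"
      unfolding T2_def using assms(4) by (intro central_binomial_sum_cong assms(1) p(1)) (simp add: D_def)
    ultimately show ?thesis
      by (intro cong_mult cong_refl)
  qed
  also have "[2 ^ n * D ^ (n mod 2) * binomial_even_sum n C D * binomial_even_sum n 1 D = 1] (mod int p)"
    unfolding D_def by (rule binomial_even_sum_product_cong[OF assms(1) p(1) assms(3)])
  finally have inverse: "[(2 * D) ^ n * (T1 * T2) = 1] (mod int p)" .
  have "coprime D (int p)"
    using assms(4) unfolding D_def coprime_iff_invertible_int by (intro exI[of _ "16 * E"]) (simp add: mult_ac)
  then have "coprime (2 * D) (int p)"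
    using assms(2) by simp
  then have "[T1 * T2 = (2 * D) ^ n] (mod int p)"
    using inverse by (rule cong_inverse_half_power[OF assms(1) p(1)])
  then show ?thesis
    unfolding T1_def T2_def D_def n_def p(2)[unfolded n_def] by (simp add: atLeast0AtMost)
qed

section \<open>p-integral rationals\<close>

locale prime_Zp =
  fixes p :: nat
  assumes prime: "prime p"
begin

lemma p_pos: "0 < p"
  using prime by (rule prime_gt_0_nat)

lemma not_dvd_one: "\<not> int p dvd 1"
  using prime_gt_1_nat[OF prime] by simp

lemma Zp_iff: "x \<in> Zp p \<longleftrightarrow> (\<exists>a b. \<not> int p dvd b \<and> x = of_int a / of_int b)"
proof
  assume "x \<in> Zp p"
  obtain a b where q: "quotient_of x = (a, b)"
    by fastforce
  then show "\<exists>a b. \<not> int p dvd b \<and> x = of_int a / of_int b"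
    using \<open>x \<in> Zp p\<close> quotient_of_div[OF q] unfolding Zp_def by auto
next
  assume "\<exists>a b. \<not> int p dvd b \<and> x = of_int a / of_int b"
  then obtain a b where ab: "\<not> int p dvd b" "x = of_int a / of_int b"
    by blast
  obtain a' b' where q: "quotient_of x = (a', b')"
    by fastforce
  have "b \<noteq> 0" "b' > 0"
    using ab(1) quotient_of_denom_pos[OF q] by auto
  moreover have "x = of_int a' / of_int b'"
    using quotient_of_div[OF q] .
  ultimately have "of_int (a' * b) = (of_int (a * b') :: rat)"
    using ab(2) by (simp add: field_simps)
  then have "a' * b = a * b'"
    by (simp only: of_int_eq_iff)
  then have "b' dvd a' * b"
    by simp
  then have "b' dvd b"
    using quotient_of_coprime[OF q] by (simp add: coprime_commute coprime_dvd_mult_right_iff)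
  then show "x \<in> Zp p"
    unfolding Zp_def using q ab(1) dvd_trans by auto
qed

lemma Zp_of_int [simp]: "of_int a \<in> Zp p"
  unfolding Zp_iff using not_dvd_one by (intro exI[of _ a] exI[of _ 1]) simp

lemma Zp_of_nat [simp]: "of_nat n \<in> Zp p"
  using Zp_of_int[of "int n"] by simp

lemma Zp_numeral [simp]: "numeral n \<in> Zp p"
  using Zp_of_int[of "numeral n"] by simp

lemma Zp_0 [simp]: "0 \<in> Zp p" and Zp_1 [simp]: "1 \<in> Zp p"
  using Zp_of_int[of 0] Zp_of_int[of 1] by simp_all

lemma Zp_add_mult [simp]:
  assumes "x \<in> Zp p" "y \<in> Zp p"
  shows "x + y \<in> Zp p" "x * y \<in> Zp p"
proof -
  obtain a b a' b' where b: "\<not> int p dvd b" "\<not> int p dvd b'"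
    and x: "x = of_int a / of_int b" and y: "y = of_int a' / of_int b'"
    using assms unfolding Zp_iff by blast
  then have "\<not> int p dvd b * b'" "b \<noteq> 0" "b' \<noteq> 0"
    using prime by (auto simp: prime_dvd_mult_iff)
  moreover from this have "x + y = of_int (a * b' + a' * b) / of_int (b * b')"
    "x * y = of_int (a * a') / of_int (b * b')"
    unfolding x y by (simp_all add: field_simps)
  ultimately show "x + y \<in> Zp p" "x * y \<in> Zp p"
    unfolding Zp_iff by blast+
qed

lemma Zp_uminus [simp]: "x \<in> Zp p \<Longrightarrow> - x \<in> Zp p"
  using Zp_add_mult(2)[OF Zp_of_int[of "-1"]] by simp

lemma Zp_power [simp]: "x \<in> Zp p \<Longrightarrow> x ^ k \<in> Zp p"
  by (induction k) simp_all

lemma Zp_sum [simp]: "(\<And>i. i \<in> S \<Longrightarrow> f i \<in> Zp p) \<Longrightarrow> sum f S \<in> Zp p"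
  by (induction S rule: infinite_finite_induct) simp_all

lemma cong_Zp_refl [simp]: "cong_Zp p x x"
  unfolding cong_Zp_def by simp

lemma cong_Zp_sym: "cong_Zp p x y \<Longrightarrow> cong_Zp p y x"
  using Zp_uminus[of "(x - y) / of_nat p"] unfolding cong_Zp_def by (simp add: minus_divide_left)

lemma cong_Zp_trans [trans]: "cong_Zp p x y \<Longrightarrow> cong_Zp p y z \<Longrightarrow> cong_Zp p x z"
  using Zp_add_mult(1)[of "(x - y) / of_nat p" "(y - z) / of_nat p"]
  unfolding cong_Zp_def by (simp add: diff_divide_distrib)

lemma cong_Zp_add:
  assumes "cong_Zp p x y" "cong_Zp p x' y'"
  shows "cong_Zp p (x + x') (y + y')"
proof -
  have "((x + x') - (y + y')) / of_nat p = (x - y) / of_nat p + (x' - y') / of_nat p"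
    by (simp add: diff_divide_distrib add_divide_distrib)
  then show ?thesis
    using assms unfolding cong_Zp_def by simp
qed

lemma cong_Zp_mult:
  assumes "cong_Zp p x y" "cong_Zp p z w" "z \<in> Zp p" "y \<in> Zp p"
  shows "cong_Zp p (x * z) (y * w)"
proof -
  have "(x * z - y * w) / of_nat p = ((x - y) * z + y * (z - w)) / of_nat p"
    by (simp add: algebra_simps)
  also have "\<dots> = (x - y) / of_nat p * z + y * ((z - w) / of_nat p)"
    by (simp add: add_divide_distrib)
  finally have eq: "(x * z - y * w) / of_nat p = (x - y) / of_nat p * z + y * ((z - w) / of_nat p)" .
  show ?thesis
    using assms unfolding cong_Zp_def eq by (simp only: Zp_add_mult)
qed

lemma cong_Zp_power:
  assumes "cong_Zp p x y" "x \<in> Zp p" "y \<in> Zp p"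
  shows "cong_Zp p (x ^ k) (y ^ k)"
  by (induction k) (use assms in \<open>simp_all add: cong_Zp_mult\<close>)

lemma cong_Zp_sum:
  "(\<And>i. i \<in> S \<Longrightarrow> cong_Zp p (f i) (g i)) \<Longrightarrow> cong_Zp p (sum f S) (sum g S)"
  by (induction S rule: infinite_finite_induct) (simp_all add: cong_Zp_add)

lemma cong_Zp_of_int_iff: "cong_Zp p (of_int a) (of_int b) \<longleftrightarrow> [a = b] (mod int p)"
proof
  assume "cong_Zp p (of_int a) (of_int b)"
  then obtain s t where "\<not> int p dvd t" "(of_int a - of_int b) / of_nat p = (of_int s / of_int t :: rat)"
    unfolding cong_Zp_def Zp_iff by blast
  moreover from this have "of_int ((a - b) * t) = (of_int (int p * s) :: rat)"
    using p_pos by (auto simp: field_simps)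
  then have "(a - b) * t = int p * s"
    by (simp only: of_int_eq_iff)
  then have "int p dvd (a - b) * t"
    by simp
  moreover have "prime (int p)"
    using prime by simp
  ultimately show "[a = b] (mod int p)"
    using \<open>\<not> int p dvd t\<close> by (simp add: cong_iff_dvd_diff prime_dvd_mult_iff)
next
  assume "[a = b] (mod int p)"
  then obtain k where "a - b = int p * k"
    by (auto simp: cong_iff_dvd_diff elim!: dvdE)
  then have "(of_int a - of_int b) / of_nat p = (of_int k :: rat)"
    using p_pos by (simp add: field_simps flip: of_int_diff)
  then show "cong_Zp p (of_int a) (of_int b)"
    unfolding cong_Zp_def by simp
qed

lemma cong_Zp_power_sum:
  assumes "x \<in> Zp p" "cong_Zp p x (of_int X)"
  shows "cong_Zp p (\<Sum>k\<in>S. of_nat (f k) * x ^ k) (of_int (\<Sum>k\<in>S. int (f k) * X ^ k))"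
  unfolding of_int_sum
  by (rule cong_Zp_sum) (simp add: cong_Zp_mult cong_Zp_power assms)

lemma Zp_cong_of_int:
  assumes "x \<in> Zp p"
  obtains X where "cong_Zp p x (of_int X)"
proof -
  obtain a b where b: "\<not> int p dvd b" and x: "x = of_int a / of_int b"
    using assms unfolding Zp_iff by blast
  have "coprime b (int p)"
    using b prime prime_imp_coprime[of "int p" b] by (auto simp: coprime_commute)
  then obtain b' where "[b * b' = 1] (mod int p)"
    using cong_solve_coprime_int by blast
  then obtain k where k: "b * b' - 1 = int p * k"
    by (auto simp: cong_iff_dvd_diff elim!: dvdE)
  have "b \<noteq> 0"
    using b by auto
  then have "(x - of_int (a * b')) / of_nat p = of_int a * (1 - of_int b * of_int b') / (of_int b * of_nat p)"
    unfolding x by (simp add: field_simps)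
  also have "\<dots> = of_int (- a * k) / of_int b"
    using arg_cong[OF k, of "of_int :: int \<Rightarrow> rat"] p_pos by (simp add: field_simps)
  finally have "cong_Zp p x (of_int (a * b'))"
    unfolding cong_Zp_def Zp_iff using b by blast
  then show ?thesis by (rule that)
qed

lemma Zp_inverse:
  assumes "w \<in> Zp p" "cong_Zp p w (of_int W)" "[W * E = 1] (mod int p)"
  shows "1 / w \<in> Zp p" "cong_Zp p (1 / w) (of_int E)"
proof -
  obtain a b where b: "\<not> int p dvd b" and w: "w = of_int a / of_int b"
    using assms(1) unfolding Zp_iff by blast
  have a: "\<not> int p dvd a"
  proof
    assume "int p dvd a"
    then obtain t where "a = int p * t" ..
    then have "(0 - w) / of_nat p = of_int (- t) / of_int b"
      unfolding w using p_pos by simp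
    then have "cong_Zp p 0 w"
      using b unfolding cong_Zp_def Zp_iff by blast
    then have "cong_Zp p (of_int 0) (of_int W)"
      using assms(2) by (simp add: cong_Zp_trans)
    then have "[0 * E = W * E] (mod int p)"
      unfolding cong_Zp_of_int_iff by (rule cong_scalar_right)
    from cong_trans[OF this assms(3)] have "[0 * E = 1] (mod int p)" .
    then show False
      using prime_gt_1_nat[OF prime] by (simp add: cong_def)
  qed
  then have "w \<noteq> 0" "1 / w = of_int b / of_int a"
    using b w by auto
  then show inverse: "1 / w \<in> Zp p"
    unfolding Zp_iff using a by blast
  have "cong_Zp p (w * of_int E) (of_int W * of_int E)"
    using assms(2) by (rule cong_Zp_mult) simp_all
  also have "cong_Zp p (of_int W * of_int E) 1"
    using assms(3) cong_Zp_of_int_iff[of "W * E" 1] by simp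
  finally have "cong_Zp p (1 / w * (w * of_int E)) (1 / w * 1)"
    using inverse assms(1) by (intro cong_Zp_mult) simp_all
  then have "cong_Zp p (of_int E) (1 / w)"
    using \<open>w \<noteq> 0\<close> by simp
  then show "cong_Zp p (1 / w) (of_int E)"
    by (rule cong_Zp_sym)
qed

lemma Legendre_rat_cong:
  assumes "odd p" "y \<in> Zp p" "cong_Zp p y (of_int Y)"
  shows "[Legendre_rat y p = Y ^ ((p - 1) div 2)] (mod int p)"
proof -
  define n where "n = (p - 1) div 2"
  obtain a b where q: "quotient_of y = (a, b)"
    by fastforce
  have "\<not> int p dvd b"
    using assms(2) q unfolding Zp_def by simp
  then have "coprime b (int p)"
    using prime prime_imp_coprime[of "int p" b] by (auto simp: coprime_commute)
  have "y * of_int b = of_int a"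
    using quotient_of_div[OF q] quotient_of_denom_pos[OF q] by simp
  then have "cong_Zp p (of_int a) (of_int (Y * b))"
    using cong_Zp_mult[OF assms(3) cong_Zp_refl, of "of_int b"] by simp
  then have "[a * b = Y * b\<^sup>2] (mod int p)"
    unfolding cong_Zp_of_int_iff power2_eq_square using cong_scalar_right[of a "Y * b" "int p" b]
    by (simp add: mult.assoc)
  have "2 < p"
    using assms(1) prime_ge_2_nat[OF prime] by (cases "p = 2") auto
  then have "[Legendre_rat y p = (a * b) ^ n] (mod int p)"
    unfolding Legendre_rat_def q n_def using euler_criterion[OF prime] by simp
  also have "[(a * b) ^ n = (Y * b\<^sup>2) ^ n] (mod int p)"
    using \<open>[a * b = Y * b\<^sup>2] (mod int p)\<close> by (rule cong_pow)
  also have "(Y * b\<^sup>2) ^ n = Y ^ n * b ^ (p - 1)"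
    using assms(1) unfolding n_def by (simp add: power_mult_distrib power_mult[symmetric])
  also have "[Y ^ n * b ^ (p - 1) = Y ^ n * 1] (mod int p)"
    using \<open>coprime b (int p)\<close> by (intro cong_scalar_left fermat_theorem_int prime)
  finally show ?thesis
    unfolding n_def by simp
qed

lemma Zp_integer_representative:
  assumes "odd p" "c \<in> Zp p" "\<not> cong_Zp p (c * (c\<^sup>2 + 1)) 0"
  obtains C E where "cong_Zp p c (of_int C)" "coprime C (int p)"
    "[16 * (C\<^sup>2 + 1) * E = 1] (mod int p)"
proof -
  obtain C where C: "cong_Zp p c (of_int C)"
    using Zp_cong_of_int[OF assms(2)] .
  have "cong_Zp p (c\<^sup>2 + 1) (of_int (C\<^sup>2 + 1))"
    using C assms(2) by (simp add: cong_Zp_add cong_Zp_power)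
  then have "cong_Zp p (c * (c\<^sup>2 + 1)) (of_int (C * (C\<^sup>2 + 1)))"
    using cong_Zp_mult[OF C] assms(2) by simp
  then have "\<not> [C * (C\<^sup>2 + 1) = 0] (mod int p)"
    using assms(3) cong_Zp_trans cong_Zp_of_int_iff[of "C * (C\<^sup>2 + 1)" 0] by auto
  then have "coprime (C * (C\<^sup>2 + 1)) (int p)"
    using prime prime_imp_coprime[of "int p" "C * (C\<^sup>2 + 1)"] by (auto simp: cong_0_iff coprime_commute)
  then have "coprime C (int p)" "coprime (2 * (2 * (2 * (2 * (C\<^sup>2 + 1))))) (int p)"
    using assms(1) by (simp_all only: coprime_mult_left_iff) simp_all
  moreover from this obtain E where "[16 * (C\<^sup>2 + 1) * E = 1] (mod int p)"
    using cong_solve_coprime_int by fastforce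
  ultimately show ?thesis
    using C that by blast
qed

lemma central_binomial_sums_Zp_cong:
  assumes "c \<in> Zp p" "cong_Zp p c (of_int C)" "[16 * (C\<^sup>2 + 1) * E = 1] (mod int p)"
  shows "cong_Zp p
    ((\<Sum>k = 0..N. of_nat ((4 * k) choose (2 * k)) * (c\<^sup>2 / (16 * (c\<^sup>2 + 1))) ^ k) *
     (\<Sum>k = 0..N. of_nat ((4 * k) choose (2 * k)) / (16 * (c\<^sup>2 + 1)) ^ k))
    (of_int ((\<Sum>k = 0..N. int ((4 * k) choose (2 * k)) * (C\<^sup>2 * E) ^ k) *
             (\<Sum>k = 0..N. int ((4 * k) choose (2 * k)) * E ^ k)))"
proof -
  define w where "w = 16 * (c\<^sup>2 + 1)"
  have square_plus_one: "cong_Zp p (c\<^sup>2 + 1) (of_int (C\<^sup>2 + 1))"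
    using assms(1,2) by (simp add: cong_Zp_add cong_Zp_power)
  then have w: "w \<in> Zp p" "cong_Zp p w (of_int (16 * (C\<^sup>2 + 1)))"
    unfolding w_def using cong_Zp_mult[OF cong_Zp_refl[of 16] square_plus_one] assms(1) by simp_all
  note inverse = Zp_inverse[OF w assms(3)]
  have "c\<^sup>2 * (1 / w) \<in> Zp p"
    using inverse(1) assms(1) by (intro Zp_add_mult(2) Zp_power)
  moreover have "cong_Zp p (c\<^sup>2 * (1 / w)) (of_int (C\<^sup>2 * E))"
    using cong_Zp_mult[OF cong_Zp_power[OF assms(2)] inverse(2)] inverse(1) assms(1) by simp
  ultimately have "cong_Zp p
      ((\<Sum>k = 0..N. of_nat ((4 * k) choose (2 * k)) * (c\<^sup>2 * (1 / w)) ^ k) *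
       (\<Sum>k = 0..N. of_nat ((4 * k) choose (2 * k)) * (1 / w) ^ k))
      (of_int ((\<Sum>k = 0..N. int ((4 * k) choose (2 * k)) * (C\<^sup>2 * E) ^ k) *
               (\<Sum>k = 0..N. int ((4 * k) choose (2 * k)) * E ^ k)))"
    unfolding of_int_mult using inverse by (intro cong_Zp_mult cong_Zp_power_sum) simp_all
  moreover have "(\<Sum>k = 0..N. of_nat ((4 * k) choose (2 * k)) * (c\<^sup>2 * (1 / w)) ^ k)
      = (\<Sum>k = 0..N. of_nat ((4 * k) choose (2 * k)) * (c\<^sup>2 / (16 * (c\<^sup>2 + 1))) ^ k)"
    "(\<Sum>k = 0..N. of_nat ((4 * k) choose (2 * k)) * (1 / w) ^ k)
      = (\<Sum>k = 0..N. of_nat ((4 * k) choose (2 * k)) / (16 * (c\<^sup>2 + 1)) ^ k)"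
    unfolding w_def by (simp, simp add: power_one_over)
  ultimately show ?thesis
    by simp
qed

end

theorem corollary2p1:
  fixes p :: nat and c :: rat
  assumes "prime p" and "odd p" and "c \<in> Zp p"
    and "\<not> cong_Zp p (c * (c^2 + 1)) 0"
  shows "cong_Zp p
    ((\<Sum>k = 0..p div 4. of_nat ((4*k) choose (2*k)) * (c^2 / (16 * (c^2 + 1)))^k) *
     (\<Sum>k = 0..p div 4. of_nat ((4*k) choose (2*k)) / (16 * (c^2 + 1))^k))
    (of_int (Legendre_rat (2 * (c^2 + 1)) p))"
proof -
  interpret prime_Zp p
    by unfold_locales (rule assms(1))
  obtain C E where C: "cong_Zp p c (of_int C)" and "coprime C (int p)"
    and E: "[16 * (C\<^sup>2 + 1) * E = 1] (mod int p)"
    using Zp_integer_representative[OF assms(2-4)] .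
  have double: "cong_Zp p (2 * (c\<^sup>2 + 1)) (of_int (2 * (C\<^sup>2 + 1)))"
    using C assms(3) by (simp add: cong_Zp_add cong_Zp_mult cong_Zp_power)
  have "[(2 * (C\<^sup>2 + 1)) ^ ((p - 1) div 2) = Legendre_rat (2 * (c\<^sup>2 + 1)) p] (mod int p)"
    by (rule cong_sym[OF Legendre_rat_cong[OF assms(2) _ double]]) (simp add: assms(3))
  with central_binomial_sum_product_cong[OF assms(1,2) \<open>coprime C (int p)\<close> E]
  have "[(\<Sum>k = 0..p div 4. int ((4 * k) choose (2 * k)) * (C\<^sup>2 * E) ^ k)
      * (\<Sum>k = 0..p div 4. int ((4 * k) choose (2 * k)) * E ^ k)
    = Legendre_rat (2 * (c\<^sup>2 + 1)) p] (mod int p)"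
    by (rule cong_trans)
  then show ?thesis
    unfolding cong_Zp_of_int_iff[symmetric]
    by (rule cong_Zp_trans[OF central_binomial_sums_Zp_cong[OF assms(3) C E]])
qed

end
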